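(* Consider the decoding setting fixed in the context. Let $t_j=|\mathcal{A}_j|$ and run the index-collision-resolution procedure with $\hat t_j=t_j$. Assume that (no $E_1$) $t_j\le T$, and that (no $E_2$) whenever, during this run, the decoder $D$ of $\mathcal{C}$ is applied to a vector of the form $[\mathbf{c}+\tilde{\mathbf{z}}_j/2^{\ell}]\bmod 2$ with $\mathbf{c}\in\mathcal{C}$ and $\ell$ a nonnegative integer, it outputs $\mathbf{c}$. Then, for every iteration $\ell\ge1$ performed by the procedure: (i) $\hat t^{(\ell)}_j=|\mathcal{A}^{(\ell)}_j|$; (ii) $\mathbf{y}^{(\ell)}_j=\sum_{i\in\mathcal{A}^{(\ell)}_j}\mathbf{x}_{i,j}+\mathbf{z}_j/2^{\ell-1}$; (iii) the decoding $\Phi(\mathbf{y}^{(\ell)}_j,\hat t^{(\ell)}_j)$ of the $\ell$-th iteration is successful; (iv) $\mathcal{L}^{(\ell)}=\mathcal{U}(\mathcal{A}^{(\ell)}_j\setminus\mathcal{B}^{(\ell)}_j)$. Moreover, for the final iteration $\tau$, $\mathcal{B}^{(\tau)}_j=\emptyset$, and hence $\mathcal{L}^{(\tau)}=\mathcal{U}(\mathcal{A}^{(\tau)}_j)$.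
   Context: Codes. Let $\mathbf{H}\in\{0,1\}^{m_p\times n_p}$ be a parity-check matrix of a binary linear code $\mathcal{C}_{\mathrm{aux}}$ of length $n_p$ with minimum Hamming distance $d$, and let $T=\lfloor (d-1)/2\rfloor$; denote the $u$-th column of $\mathbf{H}$ by $\mathbf{h}_u$. Let $\mathbf{G}\in\{0,1\}^{m_p\times n}$ be a generator matrix (full row rank) of a binary linear code $\mathcal{C}$ of length $n$ and dimension $m_p$. For $u\in\{1,\dots,n_p\}$ put $\mathbf{c}(u)=\mathbf{h}_u^T\mathbf{G}\bmod 2$ and define $\mathbf{x}(u)\in\mathbb{R}^n$ componentwise by $\mathbf{x}(u)_k=2a(\mathbf{c}(u)_k-1/2)$, where $a>0$ is fixed. Channel. In sub-block $j$, a finite set $\mathcal{A}_j$ of users transmits; user $i\in\mathcal{A}_j$ chose $u_i\in\{1,\dots,n_p\}$ and sends $\mathbf{x}_{i,j}=\mathbf{x}(u_i)$. The received vector is $\mathbf{y}_j=\sum_{i\in\mathcal{A}_j}\mathbf{x}(u_i)+\mathbf{z}_j$ with noise $\mathbf{z}_j\in\mathbb{R}^n$; put $\tilde{\mathbf{z}}_j=\mathbf{z}_j/(2a)$. "$\bmod 2$" on real vectors is componentwise reduction into $[0,2)$. Basic decoder $\Phi$. For $\mathbf{y}\in\mathbb{R}^n$ and integer $\hat t\ge0$: form $\tilde{\mathbf{y}}=[\mathbf{y}/(2a)+\hat t/2]\bmod 2$; apply a decoder $D$ for $\mathcal{C}$, obtaining $\tilde{\mathbf{c}}\in\mathcal{C}$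 (or a flagged error); recover the unique $\tilde{\mathbf{h}}$ with $\tilde{\mathbf{h}}^T\mathbf{G}=\tilde{\mathbf{c}}\bmod 2$; apply the bounded-distance syndrome decoder of $\mathcal{C}_{\mathrm{aux}}$, which returns the unique $S\subseteq\{1,\dots,n_p\}$ with $|S|\le T$ and $\sum_{u\in S}\mathbf{h}_u=\tilde{\mathbf{h}}\bmod 2$ if it exists and flags an error otherwise. $\Phi(\mathbf{y},\hat t)$ is the returned set (or $\emptyset$ with a flagged error). ICR procedure for an estimate $\hat t_j$: $\mathbf{y}^{(1)}_j=\mathbf{y}_j$, $\hat t^{(1)}_j=\hat t_j$, $\mathcal{L}^{(1)}=\Phi(\mathbf{y}^{(1)}_j,\hat t^{(1)}_j)$. For $\ell\ge1$: if $|\mathcal{L}^{(\ell)}|=\hat t^{(\ell)}_j$, stop with $\tau=\ell$ and return $\mathcal{L}^{(1)},\dots,\mathcal{L}^{(\tau)}$; if $|\mathcal{L}^{(\ell)}|>\hat t^{(\ell)}_j$, return an error; if $|\mathcal{L}^{(\ell)}|<\hat t^{(\ell)}_j$, set $\hat t^{(\ell+1)}_j=(\hat t^{(\ell)}_j-|\mathcal{L}^{(\ell)}|)/2$ (error if not an integer), $\mathbf{y}^{(\ell+1)}_j=(\mathbf{y}^{(\ell)}_j-\sum_{u\in\mathcal{L}^{(\ell)}}\mathbf{x}(u))/2$, $\mathcal{L}^{(\ell+1)}=\Phi(\mathbf{y}^{(\ell+1)}_j,\hat t^{(\ell+1)}_j)$, and continue. Auxiliary sets. For $u\in\{1,\dots,n_p\}$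 let $\mathcal{A}^{(1)}_j(u)=\{i\in\mathcal{A}_j:u_i=u\}$. For $\ell\ge1$, let $\mathcal{B}^{(\ell)}_j(u)\subseteq\mathcal{A}^{(\ell)}_j(u)$ be an (arbitrary) subset with $|\mathcal{B}^{(\ell)}_j(u)|=2\lfloor|\mathcal{A}^{(\ell)}_j(u)|/2\rfloor$, and $\mathcal{A}^{(\ell+1)}_j(u)\subseteq\mathcal{B}^{(\ell)}_j(u)$ an (arbitrary) subset with $|\mathcal{A}^{(\ell+1)}_j(u)|=|\mathcal{B}^{(\ell)}_j(u)|/2$. Put $\mathcal{A}^{(\ell)}_j=\bigcup_u\mathcal{A}^{(\ell)}_j(u)$, $\mathcal{B}^{(\ell)}_j=\bigcup_u\mathcal{B}^{(\ell)}_j(u)$. For a set $\mathcal{S}$ of users, $\mathcal{U}(\mathcal{S})=\{u_i:i\in\mathcal{S}\}$. *)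

theory Defs
  imports "HOL-Analysis.Analysis" "HOL-Library.Z2"
begin

text \<open>Binary vectors are vectors over the field bit (GF(2)); length-n real vectors are real^'n.
 Index types: 'm (rows, size m_p), 'n (code length n), 'p (columns of H, size n_p).\<close>

definition bit_to_real :: "bit \<Rightarrow> real" where
  "bit_to_real b = (if b = 1 then 1 else 0)"

definition rmod2 :: "real \<Rightarrow> real" where
  "rmod2 r = r - 2 * of_int \<lfloor>r / 2\<rfloor>"

definition vmod2 :: "real ^ 'n \<Rightarrow> real ^ 'n" where
  "vmod2 v = (\<chi> k. rmod2 (v $ k))"

definition gen_code :: "bit ^ 'n ^ 'm \<Rightarrow> (bit ^ 'n) set" where
  "gen_code G = {h v* G | h. True}"

definition aux_code :: "bit ^ 'p ^ 'm \<Rightarrow> (bit ^ 'p) set" where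
  "aux_code H = {v. H *v v = 0}"

definition hamming_dist :: "bit ^ 'p \<Rightarrow> bit ^ 'p \<Rightarrow> nat" where
  "hamming_dist v w = card {u. v $ u \<noteq> w $ u}"

definition min_dist :: "bit ^ 'p ^ 'm \<Rightarrow> nat" where
  "min_dist H = Min {hamming_dist v w | v w. v \<in> aux_code H \<and> w \<in> aux_code H \<and> v \<noteq> w}"

definition Tcap :: "bit ^ 'p ^ 'm \<Rightarrow> nat" where
  "Tcap H = (min_dist H - 1) div 2"

definition cw :: "bit ^ 'p ^ 'm \<Rightarrow> bit ^ 'n ^ 'm \<Rightarrow> 'p \<Rightarrow> bit ^ 'n" where
  "cw H G u = column u H v* G"

definition xsig :: "real \<Rightarrow> bit ^ 'p ^ 'm \<Rightarrow> bit ^ 'n ^ 'm \<Rightarrow> 'p \<Rightarrow> real ^ 'n" where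
  "xsig a H G u = (\<chi> k. 2 * a * (bit_to_real (cw H G u $ k) - 1 / 2))"

definition phi_input :: "real \<Rightarrow> real ^ 'n \<Rightarrow> nat \<Rightarrow> real ^ 'n" where
  "phi_input a y t = vmod2 (\<chi> k. y $ k / (2 * a) + real t / 2)"

definition syn_dec :: "bit ^ 'p ^ 'm \<Rightarrow> bit ^ 'm \<Rightarrow> ('p set) option" where
  "syn_dec H h =
     (if \<exists>!S. card S \<le> Tcap H \<and> (\<Sum>u\<in>S. column u H) = h
      then Some (THE S. card S \<le> Tcap H \<and> (\<Sum>u\<in>S. column u H) = h) else None)"

text \<open>Basic decoder Phi; None means a flagged error.\<close>
definition Phi :: "real \<Rightarrow> bit ^ 'p ^ 'm \<Rightarrow> bit ^ 'n ^ 'm \<Rightarrow> (real ^ 'n \<Rightarrow> (bit ^ 'n) option)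
                   \<Rightarrow> real ^ 'n \<Rightarrow> nat \<Rightarrow> ('p set) option" where
  "Phi a H G D y t =
     (case D (phi_input a y t) of
        None \<Rightarrow> None
      | Some c \<Rightarrow> (if \<exists>!h. h v* G = c then syn_dec H (THE h. h v* G = c) else None))"

definition Lres :: "real \<Rightarrow> bit ^ 'p ^ 'm \<Rightarrow> bit ^ 'n ^ 'm \<Rightarrow> (real ^ 'n \<Rightarrow> (bit ^ 'n) option)
                   \<Rightarrow> real ^ 'n \<Rightarrow> nat \<Rightarrow> 'p set" where
  "Lres a H G D y t = (case Phi a H G D y t of None \<Rightarrow> {} | Some S \<Rightarrow> S)"

text \<open>ICR procedure: icr a H G D y0 t0 k = Some (y^(k+1), t^(k+1)) if iteration k+1 is
 performed, None otherwise (procedure stopped or returned an error earlier).\<close>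
primrec icr :: "real \<Rightarrow> bit ^ 'p ^ 'm \<Rightarrow> bit ^ 'n ^ 'm \<Rightarrow> (real ^ 'n \<Rightarrow> (bit ^ 'n) option)
                 \<Rightarrow> real ^ 'n \<Rightarrow> nat \<Rightarrow> nat \<Rightarrow> ((real ^ 'n) \<times> nat) option" where
  "icr a H G D y0 t0 0 = Some (y0, t0)"
| "icr a H G D y0 t0 (Suc k) =
     (case icr a H G D y0 t0 k of
        None \<Rightarrow> None
      | Some (y, t) \<Rightarrow>
          (let L = Lres a H G D y t in
           if card L < t \<and> even (t - card L)
           then Some ((1/2) *\<^sub>R (y - (\<Sum>u\<in>L. xsig a H G u)), (t - card L) div 2)
           else None))"

definition iter_state where
  "iter_state a H G D y0 t0 l = icr a H G D y0 t0 (l - 1)"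

end

theory Submission
  imports Defs
begin

text \<open>Users choosing the same index u send the same signal. After scaling by 1/(2a) and
  shifting by t/2, the superposition of the signals is, modulo 2, the 0/1 codeword of the GF(2)
  sum of their codewords, which is the image under G of the syndrome of the set of indices
  chosen an odd number of times. That set has at most t \<le> T elements, so the syndrome decoder
  returns it exactly. Removing one user of each odd index leaves every index with even
  multiplicity, and halving the remaining vector yields an instance of the same shape with half
  of the users and half of the noise. The procedure stops exactly when the decoded list is as
  long as the number of remaining users, i.e. when no index is chosen twice.\<close>

definition labelled_family :: "('i \<Rightarrow> 'p) \<Rightarrow> ('p \<Rightarrow> 'i set) \<Rightarrow> bool" where
  "labelled_family uc P \<longleftrightarrow> (\<forall>u. finite (P u) \<and> (\<forall>i\<in>P u. uc i = u))"

definition odd_labels :: "('p \<Rightarrow> 'i set) \<Rightarrow> 'p set" where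
  "odd_labels P = {u. odd (card (P u))}"

lemma sum_UN_labelled:
  fixes P :: "'p::finite \<Rightarrow> 'i set" and g :: "'p \<Rightarrow> 'a::comm_monoid_add"
  assumes "labelled_family uc P"
  shows "(\<Sum>i\<in>(\<Union>u. P u). g (uc i)) = (\<Sum>u\<in>UNIV. \<Sum>i\<in>P u. g u)"
proof -
  have "(\<Sum>i\<in>(\<Union>u. P u). g (uc i)) = (\<Sum>u\<in>UNIV. \<Sum>i\<in>P u. g (uc i))"
    by (rule sum.UNION_disjoint) (use assms in \<open>auto simp: labelled_family_def; metis\<close>)+
  also have "\<dots> = (\<Sum>u\<in>UNIV. \<Sum>i\<in>P u. g u)"
    using assms by (auto simp: labelled_family_def intro!: sum.cong)
  finally show ?thesis .
qed

lemma card_UN_labelled: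
  fixes P :: "'p::finite \<Rightarrow> 'i set"
  assumes "labelled_family uc P"
  shows "card (\<Union>u. P u) = (\<Sum>u\<in>UNIV. card (P u))"
  by (rule card_UN_disjoint) (use assms in \<open>auto simp: labelled_family_def; metis\<close>)+

lemma card_odd_labels:
  "card (odd_labels (P :: 'p::finite \<Rightarrow> 'i set)) = (\<Sum>u\<in>UNIV. card (P u) mod 2)"
proof -
  have "card (odd_labels P) = (\<Sum>u\<in>UNIV. of_bool (u \<in> odd_labels P))"
    by simp
  also have "\<dots> = (\<Sum>u\<in>UNIV. card (P u) mod 2)"
    by (rule sum.cong) (auto simp: odd_labels_def odd_iff_mod_2_eq_one)
  finally show ?thesis .
qed

lemma card_odd_labels_le:
  fixes P :: "'p::finite \<Rightarrow> 'i set"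
  assumes "labelled_family uc P"
  shows "card (odd_labels P) \<le> card (\<Union>u. P u)"
  unfolding card_odd_labels card_UN_labelled[OF assms] by (rule sum_mono) simp

lemma card_UN_halving:
  fixes P P' :: "'p::finite \<Rightarrow> 'i set"
  assumes "labelled_family uc P" "labelled_family uc P'"
    and "\<And>u. card (P' u) = card (P u) div 2"
  shows "card (\<Union>u. P u) = 2 * card (\<Union>u. P' u) + card (odd_labels P)"
  unfolding card_UN_labelled[OF assms(1)] card_UN_labelled[OF assms(2)] card_odd_labels assms(3)
  by (simp add: sum_distrib_left flip: sum.distrib)

lemma sum_UN_halving:
  fixes P P' :: "'p::finite \<Rightarrow> 'i set" and g :: "'p \<Rightarrow> 'a::real_vector"
  assumes "labelled_family uc P" "labelled_family uc P'"
    and "\<And>u. card (P' u) = card (P u) div 2"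
  shows "(\<Sum>i\<in>(\<Union>u. P u). g (uc i))
           = 2 *\<^sub>R (\<Sum>i\<in>(\<Union>u. P' u). g (uc i)) + (\<Sum>u\<in>odd_labels P. g u)"
proof -
  have "real (card (P u)) = 2 * real (card (P' u)) + real (card (P u) mod 2)" for u
  proof -
    have "card (P u) = 2 * card (P' u) + card (P u) mod 2"
      unfolding assms(3) by simp
    then show ?thesis
      by (metis of_nat_add of_nat_mult of_nat_numeral)
  qed
  moreover have "(\<Sum>u\<in>odd_labels P. g u) = (\<Sum>u\<in>UNIV. real (card (P u) mod 2) *\<^sub>R g u)"
  proof -
    have "(\<Sum>u\<in>odd_labels P. g u) = (\<Sum>u\<in>UNIV. if u \<in> odd_labels P then g u else 0)"
      by (simp add: sum.If_cases)
    also have "\<dots> = (\<Sum>u\<in>UNIV. real (card (P u) mod 2) *\<^sub>R g u)"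
      by (rule sum.cong) (auto simp: odd_labels_def odd_iff_mod_2_eq_one)
    finally show ?thesis .
  qed
  ultimately show ?thesis
    unfolding sum_UN_labelled[OF assms(1)] sum_UN_labelled[OF assms(2)]
    by (simp add: sum_constant_scaleR scaleR_add_left scaleR_sum_right sum.distrib)
qed

lemma image_Diff_halving:
  fixes P B :: "'p \<Rightarrow> 'i set"
  assumes lab: "labelled_family uc P"
    and sub: "\<And>u. B u \<subseteq> P u" and card_B: "\<And>u. card (B u) = 2 * (card (P u) div 2)"
  shows "uc ` ((\<Union>u. P u) - (\<Union>u. B u)) = odd_labels P"
proof -
  have label: "uc i = u" if "i \<in> P u" for i u
    using lab that by (auto simp: labelled_family_def)
  have fin: "finite (P u)" for u
    using lab by (auto simp: labelled_family_def)
  have "card (P u - B u) = card (P u) mod 2" for u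
    using card_Diff_subset[OF finite_subset[OF sub fin] sub] card_B[of u] by (simp add: minus_mult_div_eq_mod)
  moreover have "P u - B u \<noteq> {} \<longleftrightarrow> card (P u - B u) \<noteq> 0" for u
    using fin[of u] by (auto simp: card_eq_0_iff)
  ultimately have nonempty: "P u - B u \<noteq> {} \<longleftrightarrow> u \<in> odd_labels P" for u
    by (simp add: odd_labels_def even_iff_mod_2_eq_zero)
  have not_in_B: "i \<notin> (\<Union>v. B v)" if "i \<in> P u - B u" for i u
  proof
    assume "i \<in> (\<Union>v. B v)"
    then obtain v where "i \<in> B v" by blast
    with sub have "i \<in> P v" by blast
    with that label have "v = u" by blast
    with \<open>i \<in> B v\<close> that show False by blast
  qed
  show ?thesis
  proof (intro equalityI subsetI)
    fix u assume "u \<in> uc ` ((\<Union>u. P u) - (\<Union>u. B u))"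
    then obtain i v where "i \<in> P v" "i \<notin> B v" "u = uc i"
      by blast
    with label nonempty show "u \<in> odd_labels P"
      by blast
  next
    fix u assume "u \<in> odd_labels P"
    with nonempty obtain i where "i \<in> P u - B u"
      by blast
    with label not_in_B show "u \<in> uc ` ((\<Union>u. P u) - (\<Union>u. B u))"
      by blast
  qed
qed

lemma halving_exhausted:
  fixes P B :: "'p::finite \<Rightarrow> 'i set"
  assumes lab: "labelled_family uc P"
    and sub: "\<And>u. B u \<subseteq> P u" and card_B: "\<And>u. card (B u) = 2 * (card (P u) div 2)"
    and card_eq: "card (odd_labels P) = card (\<Union>u. P u)"
  shows "(\<Union>u. B u) = {}"
proof -
  have "(\<Sum>u\<in>UNIV. card (P u) mod 2) = (\<Sum>u\<in>UNIV. card (P u))"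
    using card_eq unfolding card_odd_labels card_UN_labelled[OF lab] .
  then have "card (P u) mod 2 = card (P u)" for u
    by (rule sum_mono_inv) auto
  then have "card (B u) = 0" for u
    using card_B[of u] by (metis div_less mod_less_divisor mult_0_right zero_less_numeral)
  moreover have "finite (B u)" for u
    using lab sub by (meson finite_subset labelled_family_def)
  ultimately show ?thesis by auto
qed

lemma halving_chain_subset:
  fixes AA BB :: "nat \<Rightarrow> 'p \<Rightarrow> 'i set"
  assumes "\<And>u. AA 1 u = {i \<in> A. uc i = u}"
    and "\<And>l u. l \<ge> 1 \<Longrightarrow> BB l u \<subseteq> AA l u"
    and "\<And>l u. l \<ge> 1 \<Longrightarrow> AA (Suc l) u \<subseteq> BB l u"
  shows "l \<ge> 1 \<Longrightarrow> AA l u \<subseteq> {i \<in> A. uc i = u}"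
proof (induction l rule: nat_induct_at_least)
  case (Suc l)
  then show ?case
    using assms(2,3)[of l u] by blast
qed (use assms(1) in simp)

lemma sum_bitvec_const:
  assumes "finite X"
  shows "(\<Sum>i\<in>X. (v :: bit ^ 'm)) = (if even (card X) then 0 else v)"
  using assms
proof (induction X rule: finite_induct)
  case (insert x X)
  have "v + v = 0"
    by (simp add: vec_eq_iff)
  with insert show ?case
    by (auto simp del: sum_constant)
qed simp

lemma sum_UN_labelled_bitvec:
  fixes P :: "'p::finite \<Rightarrow> 'i set" and f :: "'p \<Rightarrow> bit ^ 'm"
  assumes "labelled_family uc P"
  shows "(\<Sum>i\<in>(\<Union>u. P u). f (uc i)) = (\<Sum>u\<in>odd_labels P. f u)"
proof -
  have "(\<Sum>i\<in>(\<Union>u. P u). f (uc i)) = (\<Sum>u\<in>UNIV. if u \<in> odd_labels P then f u else 0)"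
    unfolding sum_UN_labelled[OF assms] using assms
    by (intro sum.cong) (auto simp: sum_bitvec_const odd_labels_def labelled_family_def simp del: sum_constant)
  then show ?thesis
    by (simp add: sum.If_cases)
qed

lemma vector_matrix_mult_sum_left:
  "(\<Sum>i\<in>X. f i) v* (G :: 'a::comm_semiring_1 ^ 'n ^ 'm) = (\<Sum>i\<in>X. f i v* G)"
  by (induction X rule: infinite_finite_induct) (simp_all add: vector_matrix_left_distrib)

lemma rmod2_add_even: "rmod2 (r + 2 * of_int m) = rmod2 r"
proof -
  have "\<lfloor>(r + 2 * of_int m) / 2\<rfloor> = \<lfloor>r / 2\<rfloor> + m"
    by (simp add: add_divide_distrib)
  then show ?thesis
    unfolding rmod2_def by simp
qed

lemma sum_bit_to_real_even_diff:
  assumes "finite X"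
  shows "\<exists>m::int. (\<Sum>i\<in>X. bit_to_real (f i)) = bit_to_real (\<Sum>i\<in>X. f i) + 2 * of_int m"
  using assms
proof (induction X rule: finite_induct)
  case empty
  show ?case
    by (auto simp: bit_to_real_def intro: exI[of _ 0])
next
  case (insert x X)
  then obtain m where m: "(\<Sum>i\<in>X. bit_to_real (f i)) = bit_to_real (\<Sum>i\<in>X. f i) + 2 * of_int m"
    by blast
  have "\<exists>k::int. bit_to_real b + bit_to_real c = bit_to_real (b + c) + 2 * of_int k" for b c
    by (cases b; cases c) (auto simp: bit_to_real_def intro: exI[of _ 0] exI[of _ 1])
  then obtain k :: int where "bit_to_real (f x) + bit_to_real (\<Sum>i\<in>X. f i)
      = bit_to_real (f x + (\<Sum>i\<in>X. f i)) + 2 * of_int k"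
    by blast
  with insert m have "(\<Sum>i\<in>insert x X. bit_to_real (f i))
      = bit_to_real (\<Sum>i\<in>insert x X. f i) + 2 * of_int (m + k)"
    by simp
  then show ?case ..
qed

text \<open>The shift by card A / 2 turns each scaled signal c - 1/2 into its 0/1 codeword c, and
  modulo 2 a sum of 0/1 codewords is the 0/1 codeword of their GF(2) sum.\<close>
lemma phi_input_superposition:
  fixes H :: "bit ^ 'p ^ 'm" and G :: "bit ^ 'n ^ 'm"
  assumes "a > 0" and "finite A"
  shows "phi_input a ((\<Sum>i\<in>A. xsig a H G (uc i)) + (1 / 2 ^ k) *\<^sub>R z) (card A)
       = vmod2 (\<chi> q. bit_to_real ((\<Sum>i\<in>A. cw H G (uc i)) $ q) + (z $ q / (2 * a)) / 2 ^ k)"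
proof -
  have "rmod2 (((\<Sum>i\<in>A. xsig a H G (uc i)) + (1 / 2 ^ k) *\<^sub>R z) $ q / (2 * a) + real (card A) / 2)
      = rmod2 (bit_to_real ((\<Sum>i\<in>A. cw H G (uc i)) $ q) + (z $ q / (2 * a)) / 2 ^ k)" for q
  proof -
    have "((\<Sum>i\<in>A. xsig a H G (uc i)) + (1 / 2 ^ k) *\<^sub>R z) $ q / (2 * a) + real (card A) / 2
        = (\<Sum>i\<in>A. bit_to_real (cw H G (uc i) $ q)) + (z $ q / (2 * a)) / 2 ^ k"
      using \<open>a > 0\<close>
      by (simp add: xsig_def sum_subtractf sum_distrib_left[symmetric] sum_divide_distrib[symmetric]
          field_simps)
    moreover obtain m where "(\<Sum>i\<in>A. bit_to_real (cw H G (uc i) $ q))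
        = bit_to_real ((\<Sum>i\<in>A. cw H G (uc i)) $ q) + 2 * of_int m"
      using sum_bit_to_real_even_diff[OF \<open>finite A\<close>, of "\<lambda>i. cw H G (uc i) $ q"] by auto
    ultimately show ?thesis
      using rmod2_add_even[of "bit_to_real ((\<Sum>i\<in>A. cw H G (uc i)) $ q) + (z $ q / (2 * a)) / 2 ^ k" m]
      by (simp add: algebra_simps)
  qed
  then show ?thesis
    unfolding phi_input_def vmod2_def by simp
qed

lemma matrix_vector_mult_indicator:
  "(H :: bit ^ 'p::finite ^ 'm) *v (\<chi> j. of_bool (j \<in> S)) = (\<Sum>u\<in>S. column u H)"
  by (simp add: vec_eq_iff matrix_vector_mult_def column_def del: mult_bit_eq_and)

lemma hamming_dist_ge_min_dist:
  fixes H :: "bit ^ 'p::finite ^ 'm"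
  assumes "v \<in> aux_code H" "w \<in> aux_code H" "v \<noteq> w"
  shows "min_dist H \<le> hamming_dist v w"
  unfolding min_dist_def
proof (rule Min_le)
  show "finite {hamming_dist v w |v w. v \<in> aux_code H \<and> w \<in> aux_code H \<and> v \<noteq> w}"
    by (rule finite_subset[of _ "{..CARD('p)}"]) (auto simp: hamming_dist_def card_mono)
qed (use assms in blast)

text \<open>Two sets of at most T columns with the same syndrome differ by a nonzero codeword of
  C_aux of weight at most 2T < d.\<close>
lemma column_sum_inj_Tcap:
  fixes H :: "bit ^ 'p::finite ^ 'm::finite"
  assumes "card S \<le> Tcap H" "card S' \<le> Tcap H"
    and eq: "(\<Sum>u\<in>S. column u H) = (\<Sum>u\<in>S'. column u H)"
  shows "S = S'"
proof (rule ccontr)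
  assume "S \<noteq> S'"
  define v :: "bit ^ 'p" where "v = (\<chi> j. of_bool (j \<in> S)) + (\<chi> j. of_bool (j \<in> S'))"
  have "H *v v = (\<Sum>u\<in>S. column u H) + (\<Sum>u\<in>S'. column u H)"
    unfolding v_def matrix_vector_right_distrib matrix_vector_mult_indicator ..
  then have "v \<in> aux_code H"
    unfolding eq by (simp add: aux_code_def vec_eq_iff)
  have support: "{u. v $ u \<noteq> 0 $ u} = (S - S') \<union> (S' - S)"
    by (auto simp: v_def)
  with \<open>S \<noteq> S'\<close> have "v \<noteq> 0"
    by (auto simp: vec_eq_iff)
  have "hamming_dist v 0 \<noteq> 0"
    using \<open>v \<noteq> 0\<close> by (auto simp: hamming_dist_def vec_eq_iff)
  have "min_dist H \<le> hamming_dist v 0"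
    using \<open>v \<in> aux_code H\<close> \<open>v \<noteq> 0\<close> by (intro hamming_dist_ge_min_dist) (auto simp: aux_code_def)
  moreover have "hamming_dist v 0 \<le> 2 * Tcap H"
  proof -
    have "hamming_dist v 0 \<le> card (S \<union> S')"
      unfolding hamming_dist_def support by (rule card_mono) auto
    then show ?thesis
      using card_Un_le[of S S'] assms by linarith
  qed
  ultimately show False
    using \<open>hamming_dist v 0 \<noteq> 0\<close> unfolding Tcap_def by linarith
qed

lemma syn_dec_column_sum:
  fixes H :: "bit ^ 'p::finite ^ 'm::finite"
  assumes "card S \<le> Tcap H"
  shows "syn_dec H (\<Sum>u\<in>S. column u H) = Some S"
proof -
  have unique: "S' = S" if "card S' \<le> Tcap H" "(\<Sum>u\<in>S'. column u H) = (\<Sum>u\<in>S. column u H)" for S'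
    using column_sum_inj_Tcap[OF that(1) assms that(2)] .
  have "\<exists>!S'. card S' \<le> Tcap H \<and> (\<Sum>u\<in>S'. column u H) = (\<Sum>u\<in>S. column u H)"
    by (rule ex1I[of _ S]) (use assms unique in auto)
  moreover have "(THE S'. card S' \<le> Tcap H \<and> (\<Sum>u\<in>S'. column u H) = (\<Sum>u\<in>S. column u H)) = S"
    by (rule the_equality) (use assms unique in auto)
  ultimately show ?thesis
    unfolding syn_dec_def by simp
qed

lemma Phi_eq_SomeI:
  fixes H :: "bit ^ 'p::finite ^ 'm::finite" and G :: "bit ^ 'n ^ 'm"
  assumes "inj (\<lambda>h. h v* G)" and "card S \<le> Tcap H"
    and "D (phi_input a y t) = Some ((\<Sum>u\<in>S. column u H) v* G)"
  shows "Phi a H G D y t = Some S"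
proof -
  have "(THE h. h v* G = (\<Sum>u\<in>S. column u H) v* G) = (\<Sum>u\<in>S. column u H)"
    using injD[OF assms(1)] by blast
  then show ?thesis
    using assms by (auto simp: Phi_def syn_dec_column_sum dest: injD)
qed

lemma Phi_superposition:
  fixes H :: "bit ^ 'p::finite ^ 'm::finite" and G :: "bit ^ 'n ^ 'm" and P :: "'p \<Rightarrow> 'i set"
  assumes "a > 0" and "inj (\<lambda>h. h v* G)"
    and lab: "labelled_family uc P" and "card (odd_labels P) \<le> Tcap H"
    and y: "y = (\<Sum>i\<in>(\<Union>u. P u). xsig a H G (uc i)) + (1 / 2 ^ k) *\<^sub>R z"
    and t: "t = card (\<Union>u. P u)"
    and decodes: "\<And>c. c \<in> gen_code G \<Longrightarrow>
      phi_input a y t = vmod2 (\<chi> q. bit_to_real (c $ q) + (z $ q / (2 * a)) / 2 ^ k) \<Longrightarrow>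
      D (phi_input a y t) = Some c"
  shows "Phi a H G D y t = Some (odd_labels P)"
proof -
  define c where "c = (\<Sum>u\<in>odd_labels P. column u H) v* G"
  have fin: "finite (\<Union>u. P u)"
    using lab by (simp add: labelled_family_def)
  have codeword: "(\<Sum>i\<in>(\<Union>u. P u). cw H G (uc i)) = c"
    using sum_UN_labelled_bitvec[OF lab, of "\<lambda>u. column u H"]
    by (simp add: c_def cw_def vector_matrix_mult_sum_left[symmetric])
  have "c \<in> gen_code G"
    unfolding c_def gen_code_def by blast
  moreover have "phi_input a y t = vmod2 (\<chi> q. bit_to_real (c $ q) + (z $ q / (2 * a)) / 2 ^ k)"
    unfolding y t phi_input_superposition[OF \<open>a > 0\<close> fin] codeword ..
  ultimately have "D (phi_input a y t) = Some c"
    by (rule decodes)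
  then show ?thesis
    unfolding c_def by (rule Phi_eq_SomeI[OF assms(2,4)])
qed

lemma icr_Suc_SomeD:
  assumes "icr a H G D y0 t0 (Suc k) = Some (y', t')"
  obtains y t where "icr a H G D y0 t0 k = Some (y, t)"
    and "y' = (1/2) *\<^sub>R (y - (\<Sum>u\<in>Lres a H G D y t. xsig a H G u))"
    and "t' = (t - card (Lres a H G D y t)) div 2"
  using assms by (auto simp: Let_def split: option.splits if_splits)

lemma icr_invariant:
  fixes H :: "bit ^ 'p::finite ^ 'm::finite" and G :: "bit ^ 'n ^ 'm"
    and AA :: "nat \<Rightarrow> 'p \<Rightarrow> 'i set"
  assumes "a > 0" and "inj (\<lambda>h. h v* G)"
    and lab: "\<And>l. l \<ge> 1 \<Longrightarrow> labelled_family uc (AA l)"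
    and halving: "\<And>l u. l \<ge> 1 \<Longrightarrow> card (AA (Suc l) u) = card (AA l u) div 2"
    and small: "\<And>l. l \<ge> 1 \<Longrightarrow> card (odd_labels (AA l)) \<le> Tcap H"
    and decodes: "\<And>l y t c k. l \<ge> 1 \<Longrightarrow> iter_state a H G D ((\<Sum>i\<in>A. xsig a H G (uc i)) + z) (card A) l = Some (y, t) \<Longrightarrow>
      c \<in> gen_code G \<Longrightarrow>
      phi_input a y t = vmod2 (\<chi> q. bit_to_real (c $ q) + (z $ q / (2 * a)) / 2 ^ k) \<Longrightarrow>
      D (phi_input a y t) = Some c"
    and A: "(\<Union>u. AA 1 u) = A"
  shows "l \<ge> 1 \<Longrightarrow> iter_state a H G D ((\<Sum>i\<in>A. xsig a H G (uc i)) + z) (card A) l = Some (y, t) \<Longrightarrow>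
      t = card (\<Union>u. AA l u)
    \<and> y = (\<Sum>i\<in>(\<Union>u. AA l u). xsig a H G (uc i)) + (1 / 2 ^ (l - 1)) *\<^sub>R z
    \<and> Phi a H G D y t = Some (odd_labels (AA l))"
proof (induction l arbitrary: y t rule: nat_induct_at_least)
  case base
  have dec: "D (phi_input a y t) = Some c"
    if "c \<in> gen_code G" "phi_input a y t = vmod2 (\<chi> q. bit_to_real (c $ q) + (z $ q / (2 * a)) / 2 ^ 0)"
    for c
    using decodes[OF _ base that] by simp
  have y: "y = (\<Sum>i\<in>(\<Union>u. AA 1 u). xsig a H G (uc i)) + (1 / 2 ^ 0) *\<^sub>R z"
    and t: "t = card (\<Union>u. AA 1 u)"
    using base A by (simp_all add: iter_state_def)
  have "Phi a H G D y t = Some (odd_labels (AA 1))"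
    by (rule Phi_superposition[OF assms(1,2) lab[OF order_refl] small[OF order_refl] y t]) (erule (1) dec)
  with y t show ?case
    by simp
next
  case (Suc l y' t')
  let ?A = "\<Union>u. AA l u" and ?A' = "\<Union>u. AA (Suc l) u" and ?S = "odd_labels (AA l)"
  have "icr a H G D ((\<Sum>i\<in>A. xsig a H G (uc i)) + z) (card A) (Suc (l - 1)) = Some (y', t')"
    using Suc.prems Suc.hyps by (simp add: iter_state_def)
  then obtain y t where st: "iter_state a H G D ((\<Sum>i\<in>A. xsig a H G (uc i)) + z) (card A) l = Some (y, t)"
    and y': "y' = (1/2) *\<^sub>R (y - (\<Sum>u\<in>Lres a H G D y t. xsig a H G u))"
    and t': "t' = (t - card (Lres a H G D y t)) div 2"
    unfolding iter_state_def by (rule icr_Suc_SomeD)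
  have lab': "labelled_family uc (AA (Suc l))"
    using lab Suc.hyps by simp
  obtain t: "t = card ?A"
    and y: "y = (\<Sum>i\<in>?A. xsig a H G (uc i)) + (1 / 2 ^ (l - 1)) *\<^sub>R z"
    and "Phi a H G D y t = Some ?S"
    using Suc.IH[OF st] by blast
  then have L: "Lres a H G D y t = ?S"
    by (simp add: Lres_def)
  have y_next: "y' = (1/2) *\<^sub>R (y - (\<Sum>u\<in>?S. xsig a H G u))"
    and t_next: "t' = (t - card ?S) div 2"
    using y' t' L by simp_all
  have t'_eq: "t' = card ?A'"
    unfolding t_next t card_UN_halving[OF lab[OF Suc.hyps] lab' halving[OF Suc.hyps]] by simp
  have y'_eq: "y' = (\<Sum>i\<in>?A'. xsig a H G (uc i)) + (1 / 2 ^ (Suc l - 1)) *\<^sub>R z"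
  proof -
    have "(1/2::real) * (1 / 2 ^ (l - 1)) = 1 / 2 ^ (Suc l - 1)"
      using Suc.hyps by (cases l) auto
    then show ?thesis
      unfolding y_next y sum_UN_halving[OF lab[OF Suc.hyps] lab' halving[OF Suc.hyps]]
      by (simp add: algebra_simps)
  qed
  have dec: "D (phi_input a y' t') = Some c"
    if "c \<in> gen_code G"
      "phi_input a y' t' = vmod2 (\<chi> q. bit_to_real (c $ q) + (z $ q / (2 * a)) / 2 ^ (Suc l - 1))"
    for c
    using decodes[OF _ Suc.prems that] by simp
  have "Phi a H G D y' t' = Some (odd_labels (AA (Suc l)))"
    by (rule Phi_superposition[OF assms(1,2) lab' small[OF le_SucI[OF Suc.hyps]] y'_eq t'_eq]) (erule (1) dec)
  with y'_eq t'_eq show ?case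
    by blast
qed

theorem lemma1:
  fixes H :: "bit ^ 'p::finite ^ 'm::finite"
    and G :: "bit ^ 'n::finite ^ 'm"
    and D :: "real ^ 'n \<Rightarrow> (bit ^ 'n) option"
    and a :: real
    and Aj :: "'i set"
    and uc :: "'i \<Rightarrow> 'p"
    and z :: "real ^ 'n"
    and AA :: "nat \<Rightarrow> 'p \<Rightarrow> 'i set"
    and BB :: "nat \<Rightarrow> 'p \<Rightarrow> 'i set"
  assumes a_pos: "a > 0"
    and G_full_row_rank: "inj (\<lambda>h. h v* G)"
    and D_codewords: "\<And>v c. D v = Some c \<Longrightarrow> c \<in> gen_code G"
    and A_fin: "finite Aj"
    and AA1: "\<And>u. AA 1 u = {i \<in> Aj. uc i = u}"
    and BB_sub: "\<And>l u. l \<ge> 1 \<Longrightarrow> BB l u \<subseteq> AA l u"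
    and BB_card: "\<And>l u. l \<ge> 1 \<Longrightarrow> card (BB l u) = 2 * (card (AA l u) div 2)"
    and AA_sub: "\<And>l u. l \<ge> 1 \<Longrightarrow> AA (Suc l) u \<subseteq> BB l u"
    and AA_card: "\<And>l u. l \<ge> 1 \<Longrightarrow> card (AA (Suc l) u) = card (BB l u) div 2"
    and noE1: "card Aj \<le> Tcap H"
    and noE2: "\<And>l y t c k. l \<ge> 1 \<Longrightarrow>
        iter_state a H G D ((\<Sum>i\<in>Aj. xsig a H G (uc i)) + z) (card Aj) l = Some (y, t) \<Longrightarrow>
        c \<in> gen_code G \<Longrightarrow>
        phi_input a y t = vmod2 (\<chi> q. bit_to_real (c $ q) + (z $ q / (2 * a)) / 2 ^ k) \<Longrightarrow>
        D (phi_input a y t) = Some c"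
  shows "(\<forall>l y t. l \<ge> 1 \<longrightarrow>
            iter_state a H G D ((\<Sum>i\<in>Aj. xsig a H G (uc i)) + z) (card Aj) l = Some (y, t) \<longrightarrow>
              t = card (\<Union>u. AA l u)
            \<and> y = (\<Sum>i\<in>(\<Union>u. AA l u). xsig a H G (uc i)) + (1 / 2 ^ (l - 1)) *\<^sub>R z
            \<and> Phi a H G D y t \<noteq> None
            \<and> Phi a H G D y t = Some (uc ` ((\<Union>u. AA l u) - (\<Union>u. BB l u))))
       \<and> (\<forall>tau y t. tau \<ge> 1 \<longrightarrow>
            iter_state a H G D ((\<Sum>i\<in>Aj. xsig a H G (uc i)) + z) (card Aj) tau = Some (y, t) \<longrightarrow>
            card (Lres a H G D y t) = t \<longrightarrow>
              (\<Union>u. BB tau u) = {}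
            \<and> Lres a H G D y t = uc ` (\<Union>u. AA tau u))"
proof -
  have sub: "AA l u \<subseteq> {i \<in> Aj. uc i = u}" if "l \<ge> 1" for l u
    using AA1 BB_sub AA_sub that by (rule halving_chain_subset)
  have lab: "labelled_family uc (AA l)" if "l \<ge> 1" for l
    using sub[OF that] A_fin by (auto simp: labelled_family_def intro: finite_subset)
  have small: "card (odd_labels (AA l)) \<le> Tcap H" if "l \<ge> 1" for l
    using card_odd_labels_le[OF lab[OF that]] card_mono[OF A_fin, of "\<Union>u. AA l u"] sub[OF that] noE1
    by fastforce
  have halving: "card (AA (Suc l) u) = card (AA l u) div 2" if "l \<ge> 1" for l u
    using AA_card[OF that] BB_card[OF that] by simp
  have A1: "(\<Union>u. AA 1 u) = Aj"
    using AA1 by auto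
  have inv: "t = card (\<Union>u. AA l u)
      \<and> y = (\<Sum>i\<in>(\<Union>u. AA l u). xsig a H G (uc i)) + (1 / 2 ^ (l - 1)) *\<^sub>R z
      \<and> Phi a H G D y t = Some (odd_labels (AA l))"
    if "l \<ge> 1" "iter_state a H G D ((\<Sum>i\<in>Aj. xsig a H G (uc i)) + z) (card Aj) l = Some (y, t)"
    for l y t
    by (rule icr_invariant[where a = a and H = H and G = G and D = D and AA = AA and uc = uc
          and z = z and A = Aj, OF a_pos G_full_row_rank lab halving small noE2 A1 that])
  have odd: "uc ` ((\<Union>u. AA l u) - (\<Union>u. BB l u)) = odd_labels (AA l)" if "l \<ge> 1" for l
    using image_Diff_halving[OF lab[OF that] BB_sub[OF that] BB_card[OF that]] .
  have exhausted: "(\<Union>u. BB l u) = {}"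
    if "l \<ge> 1" "iter_state a H G D ((\<Sum>i\<in>Aj. xsig a H G (uc i)) + z) (card Aj) l = Some (y, t)"
      and "card (Lres a H G D y t) = t"
    for l y t
    by (rule halving_exhausted[OF lab[OF that(1)] BB_sub[OF that(1)] BB_card[OF that(1)]])
      (use inv[OF that(1,2)] that(3) in \<open>auto simp: Lres_def\<close>)
  have iteration: "t = card (\<Union>u. AA l u)
      \<and> y = (\<Sum>i\<in>(\<Union>u. AA l u). xsig a H G (uc i)) + (1 / 2 ^ (l - 1)) *\<^sub>R z
      \<and> Phi a H G D y t \<noteq> None
      \<and> Phi a H G D y t = Some (uc ` ((\<Union>u. AA l u) - (\<Union>u. BB l u)))"
    if "l \<ge> 1" "iter_state a H G D ((\<Sum>i\<in>Aj. xsig a H G (uc i)) + z) (card Aj) l = Some (y, t)"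
    for l y t
    using inv[OF that] odd[OF that(1)] by auto
  have final: "(\<Union>u. BB l u) = {} \<and> Lres a H G D y t = uc ` (\<Union>u. AA l u)"
    if "l \<ge> 1" "iter_state a H G D ((\<Sum>i\<in>Aj. xsig a H G (uc i)) + z) (card Aj) l = Some (y, t)"
      and "card (Lres a H G D y t) = t"
    for l y t
    using exhausted[OF that] inv[OF that(1,2)] odd[OF that(1)] by (auto simp: Lres_def)
  show ?thesis
    using iteration final by blast
qed

end
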